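(* Let $\mathfrak{M}$ be a structure of vocabulary $\{+,\cdot,+',\cdot'\}$ (all four symbols binary function symbols) which is a model of $P(+,\cdot,\{+',\cdot'\})\cup P(+',\cdot',\{+,\cdot\})$. Then there is an isomorphism $\pi:\mathfrak{M}\restriction\{+,\cdot\}\cong\mathfrak{M}\restriction\{+',\cdot'\}$, and moreover $\pi$ is first order definable on $\mathfrak{M}$.
   Context: $P(+,\cdot)$ denotes the first order Peano axioms in the vocabulary $\{+,\cdot\}$, with Induction Schema $\forall x_1\ldots x_n((\phi(0,\bar x)\wedge\forall y(\phi(y,\bar x)\to\phi(y+1,\bar x)))\to\forall y\phi(y,\bar x))$, where $0$ and $1$ are defined terms denoting the identity elements of $+$ and $\cdot$ respectively. For a vocabulary $L$, $P(+,\cdot,L)$ denotes the extension of $P(+,\cdot)$ in which the Induction Schema is taken for all first order formulas $\phi(y,x_1,\ldots,x_n)$ of the vocabulary $\{+,\cdot\}\cup L$. $P(+',\cdot',L)$ is defined analogously for the vocabulary $\{+',\cdot'\}$ (with $0',1'$ the identity elements of $+',\cdot'$). $\mathfrak{M}\restriction L_0$ denotes the reduct of $\mathfrak{M}$ to $L_0$. First order definable means definable by a first order formula of vocabulary $\{+,\cdot,+',\cdot'\}$ in $\mathfrak{M}$. *)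

theory Defs
  imports Main
begin

datatype fsym = Plus | Times | Plus' | Times'

datatype trm = Var nat | App fsym trm trm

datatype fm = Eq trm trm | Neg fm | Conj fm fm | Disj fm fm | Ex nat fm | All nat fm

fun evalt :: "(fsym \<Rightarrow> 'a \<Rightarrow> 'a \<Rightarrow> 'a) \<Rightarrow> (nat \<Rightarrow> 'a) \<Rightarrow> trm \<Rightarrow> 'a" where
  "evalt I e (Var n) = e n"
| "evalt I e (App f s t) = I f (evalt I e s) (evalt I e t)"

fun sat :: "(fsym \<Rightarrow> 'a \<Rightarrow> 'a \<Rightarrow> 'a) \<Rightarrow> (nat \<Rightarrow> 'a) \<Rightarrow> fm \<Rightarrow> bool" where
  "sat I e (Eq s t) = (evalt I e s = evalt I e t)"
| "sat I e (Neg \<phi>) = (\<not> sat I e \<phi>)"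
| "sat I e (Conj \<phi> \<psi>) = (sat I e \<phi> \<and> sat I e \<psi>)"
| "sat I e (Disj \<phi> \<psi>) = (sat I e \<phi> \<or> sat I e \<psi>)"
| "sat I e (Ex n \<phi>) = (\<exists>a. sat I (e(n := a)) \<phi>)"
| "sat I e (All n \<phi>) = (\<forall>a. sat I (e(n := a)) \<phi>)"

definition is_identity :: "('a \<Rightarrow> 'a \<Rightarrow> 'a) \<Rightarrow> 'a \<Rightarrow> bool" where
  "is_identity f z \<longleftrightarrow> (\<forall>x. f x z = x \<and> f z x = x)"

text \<open>The structure I is a model of the Peano axioms P(p,t,L) where p, t play the roles
  of + and *, 0 and 1 are the identity elements of p and t, and L consists of the remaining
  two symbols, so that the Induction Schema ranges over ALL first-order formulas of the
  full vocabulary {+,*,+',*'}, with arbitrary parameters (the free variables other than y).\<close>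
definition peano_model :: "(fsym \<Rightarrow> 'a \<Rightarrow> 'a \<Rightarrow> 'a) \<Rightarrow> fsym \<Rightarrow> fsym \<Rightarrow> bool" where
  "peano_model I p t \<longleftrightarrow>
     (\<exists>z u. is_identity (I p) z \<and> is_identity (I t) u \<and>
        (\<forall>x. I p x u \<noteq> z) \<and>
        (\<forall>x y. I p x u = I p y u \<longrightarrow> x = y) \<and>
        (\<forall>x. I p x z = x) \<and>
        (\<forall>x y. I p x (I p y u) = I p (I p x y) u) \<and>
        (\<forall>x. I t x z = z) \<and>
        (\<forall>x y. I t x (I p y u) = I p (I t x y) x) \<and>
        (\<forall>(\<phi>::fm) (y::nat) (e::nat \<Rightarrow> 'a).
            (sat I (e(y := z)) \<phi> \<and> (\<forall>a. sat I (e(y := a)) \<phi> \<longrightarrow> sat I (e(y := I p a u)) \<phi>))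
            \<longrightarrow> (\<forall>a. sat I (e(y := a)) \<phi>)))"

definition reduct_iso :: "(fsym \<Rightarrow> 'a \<Rightarrow> 'a \<Rightarrow> 'a) \<Rightarrow> ('a \<Rightarrow> 'a) \<Rightarrow> bool" where
  "reduct_iso I \<pi> \<longleftrightarrow> bij \<pi> \<and>
     (\<forall>x y. \<pi> (I Plus x y) = I Plus' (\<pi> x) (\<pi> y)) \<and>
     (\<forall>x y. \<pi> (I Times x y) = I Times' (\<pi> x) (\<pi> y))"

definition fo_definable_fun :: "(fsym \<Rightarrow> 'a \<Rightarrow> 'a \<Rightarrow> 'a) \<Rightarrow> ('a \<Rightarrow> 'a) \<Rightarrow> bool" where
  "fo_definable_fun I \<pi> \<longleftrightarrow>
     (\<exists>(\<phi>::fm) i j. i \<noteq> j \<and> (\<forall>e. sat I e \<phi> \<longleftrightarrow> \<pi> (e i) = e j))"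

end

theory Submission
  imports Defs
begin

text \<open>In the first structure Goedel's \<open>\<beta>\<close>-function codes finite sequences, so the map \<open>\<pi>\<close> with
  \<open>\<pi> 0 = 0'\<close> and \<open>\<pi> (x + 1) = \<pi> x +' 1'\<close> has a first-order definable graph: \<open>\<pi> x = y\<close> iff some
  coded sequence starts at \<open>0'\<close>, proceeds by \<open>+' 1'\<close> and has value \<open>y\<close> at \<open>x\<close>; such sequences
  exist by induction, each being extended by the Chinese remainder theorem. Since the induction
  schemes of both structures cover formulas of the full vocabulary, the graph of \<open>\<pi>\<close> may occur in
  them: induction in the first structure shows that \<open>\<pi>\<close> is injective and preserves \<open>+\<close> and
  \<open>\<cdot>\<close>, induction in the second that it is surjective. The parameters \<open>0, 1, 0', 1'\<close> of the
  defining formula are eliminated as the unique right identities of the four operations.\<close>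

fun term_vars :: "trm \<Rightarrow> nat set" where
  "term_vars (Var n) = {n}"
| "term_vars (App f s s') = term_vars s \<union> term_vars s'"

lemma evalt_fun_upd_fresh [simp]: "k \<notin> term_vars s \<Longrightarrow> evalt I (e(k := a)) s = evalt I e s"
  by (induction s) auto

definition imp_fm :: "fm \<Rightarrow> fm \<Rightarrow> fm" where
  "imp_fm \<phi> \<psi> = Disj (Neg \<phi>) \<psi>"

lemma sat_imp_fm [simp]: "sat I e (imp_fm \<phi> \<psi>) \<longleftrightarrow> (sat I e \<phi> \<longrightarrow> sat I e \<psi>)"
  by (simp add: imp_fm_def)

section \<open>Arithmetic in a model with induction for the full vocabulary\<close>

locale peano_structure =
  fixes I :: "fsym \<Rightarrow> 'a \<Rightarrow> 'a \<Rightarrow> 'a" and p t :: fsym and z u :: 'a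
  assumes add_zero_left: "I p z x = x" and add_zero_right: "I p x z = x"
    and mult_one_left: "I t u x = x" and mult_one_right: "I t x u = x"
    and succ_neq_zero: "I p x u \<noteq> z"
    and succ_inject: "I p x u = I p y u \<Longrightarrow> x = y"
    and add_succ: "I p x (I p y u) = I p (I p x y) u"
    and mult_zero: "I t x z = z"
    and mult_succ: "I t x (I p y u) = I p (I t x y) x"
    and induct_fm: "sat I (e(n := z)) \<phi> \<Longrightarrow>
      (\<And>a. sat I (e(n := a)) \<phi> \<Longrightarrow> sat I (e(n := I p a u)) \<phi>) \<Longrightarrow> sat I (e(n := a)) \<phi>"

lemma peano_modelE:
  assumes "peano_model I p t"
  obtains z u where "peano_structure I p t z u"
proof -
  from assms obtain z u where
    ax: "\<forall>x. I p x z = x \<and> I p z x = x" "\<forall>x. I t x u = x \<and> I t u x = x"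
    "\<forall>x. I p x u \<noteq> z" "\<forall>x y. I p x u = I p y u \<longrightarrow> x = y"
    "\<forall>x y. I p x (I p y u) = I p (I p x y) u" "\<forall>x. I t x z = z"
    "\<forall>x y. I t x (I p y u) = I p (I t x y) x"
    and ind: "\<forall>\<phi> n e. sat I (e(n := z)) \<phi> \<and> (\<forall>a. sat I (e(n := a)) \<phi> \<longrightarrow> sat I (e(n := I p a u)) \<phi>)
       \<longrightarrow> (\<forall>a. sat I (e(n := a)) \<phi>)"
    unfolding peano_model_def is_identity_def by blast
  have "peano_structure I p t z u"
    by unfold_locales (use ax ind in blast)+
  then show ?thesis by (rule that)
qed

context peano_structure
begin

abbreviation add (infixl "\<oplus>" 65) where "x \<oplus> y \<equiv> I p x y"
abbreviation mult (infixl "\<otimes>" 70) where "x \<otimes> y \<equiv> I t x y"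
abbreviation S where "S x \<equiv> x \<oplus> u"
abbreviation add_tm (infixl "[+]" 65) where "add_tm \<equiv> App p"
abbreviation mult_tm (infixl "[*]" 70) where "mult_tm \<equiv> App t"

lemma definable_induct [case_names definable zero succ]:
  assumes "\<And>a. sat I (e(n := a)) \<phi> \<longleftrightarrow> Q a" and "Q z" and "\<And>a. Q a \<Longrightarrow> Q (S a)"
  shows "Q a"
  using induct_fm[of e n \<phi> a] assms by simp

lemma add_assoc: "x \<oplus> (y \<oplus> w) = (x \<oplus> y) \<oplus> w"
  by (induction w rule: definable_induct[of "(\<lambda>_. x)(2 := y)" 0
      "Eq (Var 1 [+] (Var 2 [+] Var 0)) ((Var 1 [+] Var 2) [+] Var 0)"])
     (simp_all add: add_zero_right add_succ)

lemma one_add_commute: "u \<oplus> x = x \<oplus> u"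
  by (induction x rule: definable_induct[of "\<lambda>_. u" 0 "Eq (Var 1 [+] Var 0) (Var 0 [+] Var 1)"])
     (simp_all add: add_zero_left add_zero_right add_succ)

lemma succ_add: "S x \<oplus> y = S (x \<oplus> y)"
  by (metis add_assoc one_add_commute)

lemma add_commute: "x \<oplus> y = y \<oplus> x"
  by (induction y rule: definable_induct[of "\<lambda>_. x" 0 "Eq (Var 1 [+] Var 0) (Var 0 [+] Var 1)"])
     (simp_all add: add_zero_left add_zero_right add_succ succ_add)

lemma add_right_cancel: "x \<oplus> w = y \<oplus> w \<Longrightarrow> x = y"
  by (induction w rule: definable_induct[of "(\<lambda>_. x)(2 := y)" 0
      "imp_fm (Eq (Var 1 [+] Var 0) (Var 2 [+] Var 0)) (Eq (Var 1) (Var 2))"])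
     (auto simp: add_zero_right add_succ dest: succ_inject)

lemma add_left_cancel: "w \<oplus> x = w \<oplus> y \<Longrightarrow> x = y"
  by (metis add_right_cancel add_commute)

lemma zero_or_succ: "x = z \<or> (\<exists>w. x = S w)"
  by (induction x rule: definable_induct[of "(\<lambda>_. z)(2 := u)" 0
      "Disj (Eq (Var 0) (Var 1)) (Ex 3 (Eq (Var 0) (Var 3 [+] Var 2)))"])
     (auto simp: add_zero_left add_succ)

lemma add_eq_zero: "x \<oplus> y = z \<Longrightarrow> y = z"
  by (metis zero_or_succ add_succ succ_neq_zero)

lemma zero_mult: "z \<otimes> x = z"
  by (induction x rule: definable_induct[of "\<lambda>_. z" 0 "Eq (Var 1 [*] Var 0) (Var 1)"])
     (simp_all add: add_zero_right mult_zero mult_succ)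

lemma succ_mult: "S x \<otimes> y = x \<otimes> y \<oplus> y"
  by (induction y rule: definable_induct[of "(\<lambda>_. x)(2 := u)" 0
      "Eq ((Var 1 [+] Var 2) [*] Var 0) (Var 1 [*] Var 0 [+] Var 0)"])
     (simp_all add: add_zero_right mult_zero mult_succ add_succ, metis add_assoc add_commute)

lemma mult_commute: "x \<otimes> y = y \<otimes> x"
  by (induction y rule: definable_induct[of "\<lambda>_. x" 0 "Eq (Var 1 [*] Var 0) (Var 0 [*] Var 1)"])
     (simp_all add: mult_zero mult_succ zero_mult succ_mult)

lemma distrib_left: "x \<otimes> (y \<oplus> w) = x \<otimes> y \<oplus> x \<otimes> w"
  by (induction w rule: definable_induct[of "(\<lambda>_. x)(2 := y)" 0
      "Eq (Var 1 [*] (Var 2 [+] Var 0)) (Var 1 [*] Var 2 [+] Var 1 [*] Var 0)"])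
     (simp_all add: add_zero_right mult_zero mult_succ add_succ add_assoc)

lemma mult_assoc: "x \<otimes> (y \<otimes> w) = (x \<otimes> y) \<otimes> w"
  by (induction w rule: definable_induct[of "(\<lambda>_. x)(2 := y)" 0
      "Eq (Var 1 [*] (Var 2 [*] Var 0)) ((Var 1 [*] Var 2) [*] Var 0)"])
     (simp_all add: mult_one_right mult_zero mult_succ distrib_left)

lemma zero_neq_one: "z \<noteq> u"
  by (metis succ_neq_zero add_zero_left)

end

sublocale peano_structure \<subseteq> R: comm_semiring_1 "(\<otimes>)" u "(\<oplus>)" z
proof unfold_locales
  fix a b c
  show "a \<otimes> b \<otimes> c = a \<otimes> (b \<otimes> c)" by (rule mult_assoc[symmetric])
  show "a \<otimes> b = b \<otimes> a" by (rule mult_commute)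
  show "u \<otimes> a = a" by (rule mult_one_left)
  show "a \<oplus> b \<oplus> c = a \<oplus> (b \<oplus> c)" by (rule add_assoc[symmetric])
  show "a \<oplus> b = b \<oplus> a" by (rule add_commute)
  show "z \<oplus> a = a" by (rule add_zero_left)
  show "(a \<oplus> b) \<otimes> c = a \<otimes> c \<oplus> b \<otimes> c" by (metis distrib_left mult_commute)
  show "z \<otimes> a = z" by (rule zero_mult)
  show "a \<otimes> z = z" by (rule mult_zero)
  show "z \<noteq> u" by (rule zero_neq_one)
qed


context peano_structure
begin

definition le :: "'a \<Rightarrow> 'a \<Rightarrow> bool" (infix "\<preceq>" 50) where "x \<preceq> y \<longleftrightarrow> (\<exists>k. x \<oplus> k = y)"
definition less :: "'a \<Rightarrow> 'a \<Rightarrow> bool" (infix "\<prec>" 50) where "x \<prec> y \<longleftrightarrow> x \<preceq> y \<and> x \<noteq> y"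

definition le_fm :: "trm \<Rightarrow> trm \<Rightarrow> nat \<Rightarrow> fm" where
  "le_fm a b k = Ex k (Eq (a [+] Var k) b)"

definition less_fm :: "trm \<Rightarrow> trm \<Rightarrow> nat \<Rightarrow> fm" where
  "less_fm a b k = Conj (le_fm a b k) (Neg (Eq a b))"

lemma sat_le_fm [simp]:
  "k \<notin> term_vars a \<Longrightarrow> k \<notin> term_vars b \<Longrightarrow> sat I e (le_fm a b k) \<longleftrightarrow> evalt I e a \<preceq> evalt I e b"
  by (simp add: le_fm_def le_def)

lemma sat_less_fm [simp]:
  "k \<notin> term_vars a \<Longrightarrow> k \<notin> term_vars b \<Longrightarrow> sat I e (less_fm a b k) \<longleftrightarrow> evalt I e a \<prec> evalt I e b"
  by (simp add: less_fm_def less_def)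

lemma le_total: "x \<preceq> y \<or> y \<preceq> x"
proof -
  have "\<forall>y. x \<preceq> y \<or> y \<preceq> x"
  proof (induction x rule: definable_induct[of "\<lambda>_. z" 0
        "All 1 (Disj (le_fm (Var 0) (Var 1) 2) (le_fm (Var 1) (Var 0) 2))"])
    case zero
    show ?case by (metis le_def add_zero_left)
  next
    case (succ a)
    show ?case
    proof
      fix y
      from succ have "a \<preceq> y \<or> y \<preceq> a" by blast
      then show "S a \<preceq> y \<or> y \<preceq> S a"
      proof
        assume "a \<preceq> y"
        then obtain k where k: "a \<oplus> k = y" by (auto simp: le_def)
        show ?thesis
        proof (cases "k = z")
          case True
          then show ?thesis using k by (auto simp: le_def intro!: exI[of _ u])
        next
          case False
          then obtain w where "k = S w" using zero_or_succ by blast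
          then show ?thesis using k unfolding le_def by (metis succ_add add_succ)
        qed
      next
        assume "y \<preceq> a"
        then show ?thesis unfolding le_def by (metis add_assoc)
      qed
    qed
  qed simp
  then show ?thesis by blast
qed

lemma add_eq_self: "x \<oplus> k = x \<Longrightarrow> k = z"
  by (metis add_right_cancel add_commute add_zero_left)

lemma le_refl: "x \<preceq> x"
  unfolding le_def by (metis add_zero_right)

lemma le_trans: "x \<preceq> y \<Longrightarrow> y \<preceq> w \<Longrightarrow> x \<preceq> w"
  unfolding le_def by (metis add_assoc)

lemma le_antisym: "x \<preceq> y \<Longrightarrow> y \<preceq> x \<Longrightarrow> x = y"
  unfolding le_def by (metis add_assoc add_eq_self add_eq_zero add_zero_right)

end

sublocale peano_structure \<subseteq> O: linorder "(\<preceq>)" "(\<prec>)"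
  by unfold_locales (auto simp: less_def le_refl le_total intro: le_trans le_antisym)

sublocale peano_structure \<subseteq> O: canonically_ordered_monoid_add "(\<oplus>)" z "(\<preceq>)" "(\<prec>)"
  by unfold_locales (auto simp: le_def)

context peano_structure
begin

lemma le_add_right: "x \<preceq> x \<oplus> y"
  unfolding le_def by blast

lemma le_add_left: "x \<preceq> y \<oplus> x"
  by (metis le_add_right add_commute)

lemma less_succ: "x \<prec> S x"
  unfolding less_def using le_add_right add_eq_self zero_neq_one by metis

lemma less_succ_iff: "x \<prec> S y \<longleftrightarrow> x \<preceq> y"
proof
  assume "x \<prec> S y"
  then obtain k where k: "S y = x \<oplus> k" "k \<noteq> z" by (rule O.lessE)
  then obtain w where "k = S w" using zero_or_succ by blast
  then have "x \<oplus> w = y" using k by (metis add_succ succ_inject)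
  then show "x \<preceq> y" unfolding le_def by blast
next
  assume "x \<preceq> y"
  then show "x \<prec> S y" using less_succ O.le_less_trans by blast
qed

lemma succ_le_iff: "S x \<preceq> y \<longleftrightarrow> x \<prec> y"
  using less_succ_iff O.not_less by blast

lemma one_le: "k \<noteq> z \<Longrightarrow> u \<preceq> k"
  by (metis zero_or_succ le_add_left)

lemma le_mult_left: "k \<noteq> z \<Longrightarrow> y \<preceq> k \<otimes> y"
  by (metis zero_or_succ succ_mult le_add_left)

lemma mult_eq_zero: "x \<otimes> y = z \<Longrightarrow> x = z \<or> y = z"
  by (metis zero_or_succ mult_succ add_eq_zero)

lemma remainder_unique:
  assumes "q \<otimes> m \<oplus> r = q' \<otimes> m \<oplus> r'" and "r \<prec> m" and "r' \<prec> m"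
  shows "r = r'"
proof -
  have "r = r'" if eq: "q \<otimes> m \<oplus> r = q' \<otimes> m \<oplus> r'" and "r \<prec> m" and "q \<preceq> q'" for q q' r r'
  proof -
    obtain k where "q' = q \<oplus> k" using \<open>q \<preceq> q'\<close> by (rule O.less_eqE)
    with eq have "q \<otimes> m \<oplus> r = q \<otimes> m \<oplus> (k \<otimes> m \<oplus> r')" by (simp add: algebra_simps)
    then have r: "r = k \<otimes> m \<oplus> r'" by (rule add_left_cancel)
    show "r = r'"
    proof (cases "k = z")
      case False
      then have "m \<preceq> r" unfolding r using le_mult_left le_add_right O.order_trans by blast
      with \<open>r \<prec> m\<close> show ?thesis by simp
    qed (simp add: r)
  qed
  then show ?thesis using assms le_total by metis
qed

lemma division_exists:
  assumes "m \<noteq> z"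
  shows "\<exists>q r. x = q \<otimes> m \<oplus> r \<and> r \<prec> m"
proof (induction x rule: definable_induct[of "(\<lambda>_. z)(1 := m)" 0
    "Ex 2 (Ex 3 (Conj (Eq (Var 0) (Var 2 [*] Var 1 [+] Var 3)) (less_fm (Var 3) (Var 1) 4)))"])
  case zero
  show ?case using assms by (intro exI[of _ z]) (simp add: O.zero_less_iff_neq_zero)
next
  case (succ a)
  then obtain q r where qr: "a = q \<otimes> m \<oplus> r" "r \<prec> m" by blast
  then have Sa: "S a = q \<otimes> m \<oplus> S r" by (simp add: add_assoc)
  show ?case
  proof (cases "S r = m")
    case True
    then have "S a = S q \<otimes> m \<oplus> z" using Sa by (simp add: succ_mult)
    then show ?thesis using assms O.zero_less_iff_neq_zero by blast
  next
    case False
    then have "S r \<prec> m" using qr succ_le_iff O.le_less by blast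
    then show ?thesis using Sa by blast
  qed
qed simp

definition remainder :: "'a \<Rightarrow> 'a \<Rightarrow> 'a" where "remainder x m = (THE r. \<exists>q. x = q \<otimes> m \<oplus> r \<and> r \<prec> m)"

lemma remainder_eqI: "x = q \<otimes> m \<oplus> r \<Longrightarrow> r \<prec> m \<Longrightarrow> remainder x m = r"
  unfolding remainder_def by (rule the_equality) (auto dest: remainder_unique)

lemma division_remainder: "m \<noteq> z \<Longrightarrow> \<exists>q. x = q \<otimes> m \<oplus> remainder x m \<and> remainder x m \<prec> m"
  using division_exists remainder_eqI by metis

lemma remainder_le: "m \<noteq> z \<Longrightarrow> remainder x m \<preceq> x"
  using division_remainder le_add_left by metis

lemma remainder_add_mult: "m \<noteq> z \<Longrightarrow> remainder (x \<oplus> k \<otimes> m) m = remainder x m"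
proof -
  assume "m \<noteq> z"
  then obtain q where q: "x = q \<otimes> m \<oplus> remainder x m" "remainder x m \<prec> m"
    using division_remainder by blast
  then have "x \<oplus> k \<otimes> m = (q \<oplus> k) \<otimes> m \<oplus> remainder x m" by (simp add: algebra_simps)
  then show ?thesis using q remainder_eqI by blast
qed

section \<open>Goedel's \<open>\<beta>\<close>-function\<close>

definition beta_modulus :: "'a \<Rightarrow> 'a \<Rightarrow> 'a" where
  "beta_modulus d i = S i \<otimes> d \<oplus> u"

definition beta :: "'a \<Rightarrow> 'a \<Rightarrow> 'a \<Rightarrow> 'a" where
  "beta c d i = remainder c (beta_modulus d i)"

definition divides :: "'a \<Rightarrow> 'a \<Rightarrow> bool" where
  "divides a b \<longleftrightarrow> (\<exists>k. b = k \<otimes> a)"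

definition invertible_mod :: "'a \<Rightarrow> 'a \<Rightarrow> bool" where
  "invertible_mod L m \<longleftrightarrow> (\<exists>a k. a \<otimes> L = k \<otimes> m \<oplus> u)"

text \<open>In the following formula builders the trailing \<^typ>\<open>nat\<close> arguments are the bound variables,
  which must not occur in the term arguments, and \<open>w\<close> is a term denoting \<open>u\<close>: the vocabulary
  has no constant symbols.\<close>

definition remainder_fm :: "trm \<Rightarrow> trm \<Rightarrow> trm \<Rightarrow> nat \<Rightarrow> fm" where
  "remainder_fm x m r k = Conj (less_fm r m k) (Ex k (Eq x (Var k [*] m [+] r)))"

definition beta_modulus_tm :: "trm \<Rightarrow> trm \<Rightarrow> trm \<Rightarrow> trm" where
  "beta_modulus_tm d i w = (i [+] w) [*] d [+] w"

definition beta_fm :: "trm \<Rightarrow> trm \<Rightarrow> trm \<Rightarrow> trm \<Rightarrow> trm \<Rightarrow> nat \<Rightarrow> fm" where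
  "beta_fm c d i r w k = remainder_fm c (beta_modulus_tm d i w) r k"

definition divides_fm :: "trm \<Rightarrow> trm \<Rightarrow> nat \<Rightarrow> fm" where
  "divides_fm a b k = Ex k (Eq b (Var k [*] a))"

definition invertible_mod_fm :: "trm \<Rightarrow> trm \<Rightarrow> trm \<Rightarrow> nat \<Rightarrow> nat \<Rightarrow> fm" where
  "invertible_mod_fm L m w k k' = Ex k (Ex k' (Eq (Var k [*] L) (Var k' [*] m [+] w)))"

lemma beta_modulus_neq_zero: "beta_modulus d i \<noteq> z"
  unfolding beta_modulus_def by (rule succ_neq_zero)

lemma sat_remainder_fm [simp]:
  assumes "k \<notin> term_vars x" "k \<notin> term_vars m" "k \<notin> term_vars r" "evalt I e m \<noteq> z"
  shows "sat I e (remainder_fm x m r k) \<longleftrightarrow> remainder (evalt I e x) (evalt I e m) = evalt I e r"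
  using assms division_remainder[of "evalt I e m" "evalt I e x"]
  unfolding remainder_fm_def by (auto dest: remainder_eqI)

lemma evalt_beta_modulus_tm [simp]:
  "evalt I e w = u \<Longrightarrow> evalt I e (beta_modulus_tm d i w) = beta_modulus (evalt I e d) (evalt I e i)"
  by (simp add: beta_modulus_tm_def beta_modulus_def)

lemma term_vars_beta_modulus_tm [simp]:
  "term_vars (beta_modulus_tm d i w) = term_vars d \<union> term_vars i \<union> term_vars w"
  by (auto simp: beta_modulus_tm_def)

lemma sat_beta_fm [simp]:
  assumes "k \<notin> term_vars c" "k \<notin> term_vars d" "k \<notin> term_vars i" "k \<notin> term_vars r"
    "k \<notin> term_vars w" "evalt I e w = u"
  shows "sat I e (beta_fm c d i r w k) \<longleftrightarrow> beta (evalt I e c) (evalt I e d) (evalt I e i) = evalt I e r"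
  using assms beta_modulus_neq_zero unfolding beta_fm_def beta_def by simp

lemma sat_divides_fm [simp]:
  "k \<notin> term_vars a \<Longrightarrow> k \<notin> term_vars b \<Longrightarrow>
    sat I e (divides_fm a b k) \<longleftrightarrow> divides (evalt I e a) (evalt I e b)"
  by (simp add: divides_fm_def divides_def)

lemma sat_invertible_mod_fm [simp]:
  assumes "k \<notin> term_vars L" "k \<notin> term_vars m" "k \<notin> term_vars w"
    "k' \<notin> term_vars L" "k' \<notin> term_vars m" "k' \<notin> term_vars w" "k \<noteq> k'" "evalt I e w = u"
  shows "sat I e (invertible_mod_fm L m w k k') \<longleftrightarrow> invertible_mod (evalt I e L) (evalt I e m)"
  using assms by (simp add: invertible_mod_fm_def invertible_mod_def)

lemma divides_mult_right: "divides a b \<Longrightarrow> divides a (b \<otimes> c)"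
  unfolding divides_def by (metis mult_assoc mult_commute)

lemma exists_common_multiple: "\<exists>D. D \<noteq> z \<and> (\<forall>k. u \<preceq> k \<and> k \<preceq> n \<longrightarrow> divides k D)"
proof (induction n rule: definable_induct[of "(\<lambda>_. z)(2 := u)" 0
    "Ex 5 (Conj (Neg (Eq (Var 5) (Var 1)))
      (All 6 (imp_fm (Conj (le_fm (Var 2) (Var 6) 7) (le_fm (Var 6) (Var 0) 7))
        (divides_fm (Var 6) (Var 5) 7))))"])
  case zero
  show ?case using zero_neq_one by (intro exI[of _ u]) auto
next
  case (succ a)
  then obtain D where D: "D \<noteq> z" "\<forall>k. u \<preceq> k \<and> k \<preceq> a \<longrightarrow> divides k D" by blast
  have "D \<otimes> S a \<noteq> z" using D(1) succ_neq_zero mult_eq_zero by blast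
  moreover have "divides k (D \<otimes> S a)" if "u \<preceq> k" "k \<preceq> S a" for k
  proof (cases "k = S a")
    case False
    then have "k \<preceq> a" using \<open>k \<preceq> S a\<close> less_succ_iff O.le_less by blast
    then show ?thesis using D(2) \<open>u \<preceq> k\<close> divides_mult_right by blast
  qed (auto simp: divides_def)
  ultimately show ?case by blast
qed simp

lemma invertible_mod_mult:
  assumes "invertible_mod A m" and "invertible_mod B m"
  shows "invertible_mod (A \<otimes> B) m"
proof -
  obtain a k b l where ak: "a \<otimes> A = k \<otimes> m \<oplus> u" and bl: "b \<otimes> B = l \<otimes> m \<oplus> u"
    using assms unfolding invertible_mod_def by blast
  have "(a \<otimes> b) \<otimes> (A \<otimes> B) = (a \<otimes> A) \<otimes> (b \<otimes> B)" by (simp add: ac_simps)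
  also have "\<dots> = (k \<otimes> l \<otimes> m \<oplus> k \<oplus> l) \<otimes> m \<oplus> u" unfolding ak bl by (simp add: algebra_simps)
  finally show ?thesis unfolding invertible_mod_def by blast
qed

text \<open>With \<open>k = j - i\<close> we have \<open>(j + 1) m\<^sub>i = (i + 1) m\<^sub>j + k\<close>, and \<open>k\<close> divides \<open>d\<close>; multiplying by
  \<open>(j + 1) W (d / k)\<close> for \<open>W = (j + 1) d = m\<^sub>j - 1\<close> turns \<open>k\<close> into \<open>W\<^sup>2 \<equiv> 1 (mod m\<^sub>j)\<close>.\<close>

lemma invertible_mod_beta_modulus:
  assumes d: "d \<noteq> z" and dvd: "\<forall>k. u \<preceq> k \<and> k \<preceq> N \<longrightarrow> divides k d" and "i \<prec> j" and "j \<preceq> N"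
  shows "invertible_mod (beta_modulus d i) (beta_modulus d j)"
proof -
  obtain k where jk: "j = i \<oplus> k" and "k \<noteq> z" using \<open>i \<prec> j\<close> by (rule O.lessE)
  have "k \<preceq> N" using \<open>j \<preceq> N\<close> jk le_add_left O.order_trans by metis
  then obtain e where e: "d = e \<otimes> k" using dvd one_le[OF \<open>k \<noteq> z\<close>] unfolding divides_def by blast
  define W where "W = S j \<otimes> d"
  have "W \<noteq> z" unfolding W_def using d succ_neq_zero mult_eq_zero by blast
  then obtain V where V: "W = S V" using zero_or_succ by blast
  have mj: "beta_modulus d j = S W" unfolding beta_modulus_def W_def ..
  have key: "S j \<otimes> beta_modulus d i = S i \<otimes> beta_modulus d j \<oplus> k"
    unfolding beta_modulus_def jk by (simp add: algebra_simps)
  have WW: "W \<otimes> W = V \<otimes> beta_modulus d j \<oplus> u"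
    unfolding mj V by (simp add: algebra_simps R.mult_2_right)
  have "(S j \<otimes> S j \<otimes> W \<otimes> e) \<otimes> beta_modulus d i = (S j \<otimes> W \<otimes> e) \<otimes> (S j \<otimes> beta_modulus d i)"
    by (simp add: ac_simps)
  also have "\<dots> = (S j \<otimes> W \<otimes> e \<otimes> S i) \<otimes> beta_modulus d j \<oplus> W \<otimes> (S j \<otimes> (e \<otimes> k))"
    unfolding key by (simp add: algebra_simps)
  also have "\<dots> = (S j \<otimes> W \<otimes> e \<otimes> S i \<oplus> V) \<otimes> beta_modulus d j \<oplus> u"
    unfolding e[symmetric] W_def[symmetric] WW by (simp add: algebra_simps)
  finally show ?thesis unfolding invertible_mod_def by blast
qed

lemma beta_moduli_product:
  assumes d: "d \<noteq> z" and dvd: "\<forall>k. u \<preceq> k \<and> k \<preceq> N \<longrightarrow> divides k d"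
  shows "\<exists>L. (\<forall>i. i \<prec> n \<longrightarrow> divides (beta_modulus d i) L) \<and>
    (\<forall>j. n \<preceq> j \<and> j \<preceq> N \<longrightarrow> invertible_mod L (beta_modulus d j))"
proof (induction n rule: definable_induct[of "(\<lambda>_. z)(1 := N, 2 := u, 3 := d)" 0
    "Ex 5 (Conj
      (All 6 (imp_fm (less_fm (Var 6) (Var 0) 7)
        (divides_fm (beta_modulus_tm (Var 3) (Var 6) (Var 2)) (Var 5) 7)))
      (All 6 (imp_fm (Conj (le_fm (Var 0) (Var 6) 7) (le_fm (Var 6) (Var 1) 7))
        (invertible_mod_fm (Var 5) (beta_modulus_tm (Var 3) (Var 6) (Var 2)) (Var 2) 7 8))))"])
  case zero
  have "invertible_mod u m" for m
    unfolding invertible_mod_def by (metis zero_mult add_zero_left mult_one_left)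
  then show ?case by auto
next
  case (succ a)
  then obtain L where L: "\<forall>i. i \<prec> a \<longrightarrow> divides (beta_modulus d i) L"
    "\<forall>j. a \<preceq> j \<and> j \<preceq> N \<longrightarrow> invertible_mod L (beta_modulus d j)"
    by blast
  have "divides (beta_modulus d i) (L \<otimes> beta_modulus d a)" if "i \<prec> S a" for i
  proof (cases "i = a")
    case False
    then show ?thesis using that L(1) less_succ_iff O.le_less divides_mult_right by blast
  qed (auto simp: divides_def mult_commute)
  moreover have "invertible_mod (L \<otimes> beta_modulus d a) (beta_modulus d j)"
    if "S a \<preceq> j" "j \<preceq> N" for j
    using that L(2) invertible_mod_mult invertible_mod_beta_modulus[OF d dvd] succ_le_iff O.less_imp_le
    by blast
  ultimately show ?case by blast
qed simp

lemma remainder_shift_invertible: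
  assumes "invertible_mod L m" and "r \<prec> m"
  shows "\<exists>s. remainder (c \<oplus> s \<otimes> L) m = r"
proof -
  have "m \<noteq> z" using \<open>r \<prec> m\<close> by auto
  obtain a K where aK: "a \<otimes> L = K \<otimes> m \<oplus> u" using assms(1) unfolding invertible_mod_def by blast
  obtain q where q: "c = q \<otimes> m \<oplus> remainder c m" "remainder c m \<prec> m"
    using division_remainder[OF \<open>m \<noteq> z\<close>] by blast
  obtain w where w: "remainder c m \<oplus> w = m" using q(2) unfolding less_def le_def by blast
  have "c \<oplus> (a \<otimes> (r \<oplus> w)) \<otimes> L = q \<otimes> m \<oplus> remainder c m \<oplus> (r \<oplus> w) \<otimes> (a \<otimes> L)"
    using q(1) by (metis mult_assoc mult_commute)
  also have "\<dots> = q \<otimes> m \<oplus> (r \<oplus> w) \<otimes> K \<otimes> m \<oplus> (remainder c m \<oplus> w) \<oplus> r"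
    unfolding aK by (simp add: algebra_simps)
  also have "\<dots> = (q \<oplus> (r \<oplus> w) \<otimes> K \<oplus> u) \<otimes> m \<oplus> r"
    unfolding w by (simp add: algebra_simps)
  finally show ?thesis using remainder_eqI \<open>r \<prec> m\<close> by blast
qed

text \<open>The sequence is matched on an initial segment of growing length \<open>n\<close>: the value at \<open>n\<close> is
  adjusted by adding a multiple of the product of the first \<open>n\<close> moduli, which is invertible modulo
  the \<open>n\<close>-th one.\<close>

lemma beta_chinese_remainder:
  assumes d: "d \<noteq> z" and dvd: "\<forall>k. u \<preceq> k \<and> k \<preceq> S x \<longrightarrow> divides k d"
    and bounds: "\<forall>i. i \<preceq> x \<longrightarrow> beta c e i \<prec> beta_modulus d i" "v \<prec> beta_modulus d (S x)"
  shows "\<exists>c'. (\<forall>i. i \<preceq> x \<longrightarrow> beta c' d i = beta c e i) \<and> beta c' d (S x) = v"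
proof -
  define f where "f i = (if i \<preceq> x then beta c e i else v)" for i
  have f_less: "f i \<prec> beta_modulus d i" if "i \<preceq> S x" for i
    using that bounds less_succ_iff O.le_less unfolding f_def by auto
  have "n \<preceq> S (S x) \<longrightarrow> (\<exists>c'. \<forall>i. i \<prec> n \<longrightarrow> beta c' d i = f i)" for n
  proof (induction n rule: definable_induct[of "(\<lambda>_. z)(1 := x, 2 := u, 3 := c, 4 := e, 5 := v, 6 := d)" 0
      "imp_fm (le_fm (Var 0) (Var 1 [+] Var 2 [+] Var 2) 10)
        (Ex 7 (All 8 (imp_fm (less_fm (Var 8) (Var 0) 10)
          (Disj
            (Conj (le_fm (Var 8) (Var 1) 10)
              (Ex 9 (Conj (beta_fm (Var 3) (Var 4) (Var 8) (Var 9) (Var 2) 10)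
                (beta_fm (Var 7) (Var 6) (Var 8) (Var 9) (Var 2) 10))))
            (Conj (Neg (le_fm (Var 8) (Var 1) 10)) (beta_fm (Var 7) (Var 6) (Var 8) (Var 5) (Var 2) 10))))))"])
    case definable
    then show ?case by (auto simp: f_def)
  next
    case (succ a)
    show ?case
    proof
      assume "S a \<preceq> S (S x)"
      then have "a \<preceq> S x" using succ_le_iff less_succ_iff by blast
      then obtain c' where c': "\<forall>i. i \<prec> a \<longrightarrow> beta c' d i = f i"
        using succ O.order_trans le_add_right by blast
      obtain L where L: "\<forall>i. i \<prec> a \<longrightarrow> divides (beta_modulus d i) L"
        "invertible_mod L (beta_modulus d a)"
        using beta_moduli_product[OF d dvd, of a] \<open>a \<preceq> S x\<close> by blast
      obtain s where s: "remainder (c' \<oplus> s \<otimes> L) (beta_modulus d a) = f a"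
        using remainder_shift_invertible[OF L(2) f_less[OF \<open>a \<preceq> S x\<close>]] by blast
      have "beta (c' \<oplus> s \<otimes> L) d i = f i" if "i \<prec> S a" for i
      proof (cases "i = a")
        case False
        then have "i \<prec> a" using that less_succ_iff O.le_less by blast
        then obtain l where "L = l \<otimes> beta_modulus d i" using L(1) unfolding divides_def by blast
        then have "c' \<oplus> s \<otimes> L = c' \<oplus> (s \<otimes> l) \<otimes> beta_modulus d i" by (simp add: mult_assoc)
        then show ?thesis
          using c' \<open>i \<prec> a\<close> remainder_add_mult beta_modulus_neq_zero unfolding beta_def by metis
      qed (use s in \<open>simp add: beta_def\<close>)
      then show "\<exists>c'. \<forall>i. i \<prec> S a \<longrightarrow> beta c' d i = f i" by blast
    qed
  qed simp
  then obtain c' where "\<forall>i. i \<prec> S (S x) \<longrightarrow> beta c' d i = f i" by blast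
  then have c': "beta c' d i = f i" if "i \<preceq> S x" for i using that less_succ_iff by blast
  show ?thesis
  proof (intro exI conjI allI impI)
    fix i assume "i \<preceq> x"
    then have "i \<preceq> S x" using le_add_right O.order_trans by blast
    with \<open>i \<preceq> x\<close> show "beta c' d i = beta c e i" using c'[of i] unfolding f_def by simp
  next
    have "\<not> S x \<preceq> x" using less_succ[of x] by (simp add: O.not_le)
    then show "beta c' d (S x) = v" using c'[of "S x"] unfolding f_def by simp
  qed
qed
lemma beta_append: "\<exists>c' d'. (\<forall>i. i \<preceq> x \<longrightarrow> beta c' d' i = beta c d i) \<and> beta c' d' (S x) = v"
proof -
  obtain D where D: "D \<noteq> z" "\<forall>k. u \<preceq> k \<and> k \<preceq> S x \<longrightarrow> divides k D"
    using exists_common_multiple by blast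
  define B where "B = c \<oplus> v"
  define d' where "d' = D \<otimes> S B"
  have "d' \<noteq> z" unfolding d'_def using D(1) succ_neq_zero mult_eq_zero by blast
  have dvd: "\<forall>k. u \<preceq> k \<and> k \<preceq> S x \<longrightarrow> divides k d'"
    unfolding d'_def using D(2) divides_mult_right by blast
  have B_less: "B \<prec> beta_modulus d' i" for i
  proof -
    have "B \<prec> S B" by (rule less_succ)
    also have "S B \<preceq> d'" unfolding d'_def using le_mult_left[OF D(1)] mult_commute by metis
    also have "d' \<preceq> S i \<otimes> d'" using le_mult_left succ_neq_zero by blast
    also have "S i \<otimes> d' \<prec> beta_modulus d' i" unfolding beta_modulus_def by (rule less_succ)
    finally show ?thesis .
  qed
  have "beta c d i \<prec> beta_modulus d' i" for i
  proof -
    have "beta c d i \<preceq> c" unfolding beta_def using remainder_le beta_modulus_neq_zero by blast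
    also have "c \<preceq> B" unfolding B_def by (rule le_add_right)
    finally show ?thesis using B_less O.le_less_trans by blast
  qed
  moreover have "v \<prec> beta_modulus d' (S x)"
    using B_less le_add_left O.le_less_trans unfolding B_def by blast
  ultimately show ?thesis using beta_chinese_remainder[OF \<open>d' \<noteq> z\<close> dvd] by blast
qed

section \<open>Definable iteration\<close>

definition codes_iteration :: "fsym \<Rightarrow> 'a \<Rightarrow> 'a \<Rightarrow> 'a \<Rightarrow> 'a \<Rightarrow> 'a \<Rightarrow> bool" where
  "codes_iteration q y s c d x \<longleftrightarrow>
    beta c d z = y \<and> (\<forall>i. i \<prec> x \<longrightarrow> beta c d (S i) = I q (beta c d i) s)"

text \<open>The formulas below read the constants from fixed variables: \<open>Var 1\<close> and \<open>Var 2\<close> denote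
  \<open>z\<close> and \<open>u\<close>, \<open>Var 3\<close> and \<open>Var 4\<close> the start value and the step parameter of the iteration;
  the variables \<open>30\<close>--\<open>34\<close> are reserved for bound variables.\<close>

definition codes_iteration_fm :: "fsym \<Rightarrow> trm \<Rightarrow> trm \<Rightarrow> trm \<Rightarrow> fm" where
  "codes_iteration_fm q c d x = Conj (beta_fm c d (Var 1) (Var 3) (Var 2) 30)
    (All 31 (imp_fm (less_fm (Var 31) x 30)
      (Ex 32 (Conj (beta_fm c d (Var 31) (Var 32) (Var 2) 30)
        (beta_fm c d (Var 31 [+] Var 2) (App q (Var 32) (Var 4)) (Var 2) 30)))))"

lemma sat_codes_iteration_fm [simp]:
  assumes "e 1 = z" "e 2 = u"
    and "30 \<notin> term_vars c" "31 \<notin> term_vars c" "32 \<notin> term_vars c"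
    and "30 \<notin> term_vars d" "31 \<notin> term_vars d" "32 \<notin> term_vars d"
    and "30 \<notin> term_vars x" "31 \<notin> term_vars x" "32 \<notin> term_vars x"
  shows "sat I e (codes_iteration_fm q c d x) \<longleftrightarrow>
    codes_iteration q (e 3) (e 4) (evalt I e c) (evalt I e d) (evalt I e x)"
  using assms unfolding codes_iteration_fm_def codes_iteration_def by auto

lemma codes_iteration_exists: "\<exists>c d. codes_iteration q y s c d x"
proof (induction x rule: definable_induct[of "(\<lambda>_. z)(2 := u, 3 := y, 4 := s)" 0
    "Ex 5 (Ex 6 (codes_iteration_fm q (Var 5) (Var 6) (Var 0)))"])
  case zero
  have "beta y y z = y" unfolding beta_def beta_modulus_def
    by (rule remainder_eqI[of _ z]) (simp_all add: less_succ)
  then show ?case unfolding codes_iteration_def by auto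
next
  case (succ a)
  then obtain c d where cd: "codes_iteration q y s c d a" by blast
  obtain c' d' where c': "\<forall>i. i \<preceq> a \<longrightarrow> beta c' d' i = beta c d i"
    and last: "beta c' d' (S a) = I q (beta c d a) s"
    using beta_append by blast
  have "codes_iteration q y s c' d' (S a)"
    unfolding codes_iteration_def
  proof (intro conjI allI impI)
    show "beta c' d' z = y" using c' cd unfolding codes_iteration_def by simp
  next
    fix i assume "i \<prec> S a"
    then have "i \<preceq> a" using less_succ_iff by blast
    show "beta c' d' (S i) = I q (beta c' d' i) s"
    proof (cases "i = a")
      case False
      then have "i \<prec> a" using \<open>i \<preceq> a\<close> O.le_less by blast
      then show ?thesis using c' cd succ_le_iff unfolding codes_iteration_def by auto
    qed (simp add: last c')
  qed
  then show ?case by blast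
qed simp

lemma codes_iteration_unique:
  assumes "codes_iteration q y s c d x" and "codes_iteration q y s c' d' x" and "i \<preceq> x"
  shows "beta c d i = beta c' d' i"
proof -
  have "i \<preceq> x \<longrightarrow> beta c d i = beta c' d' i" for i
  proof (induction i rule: definable_induct[of "(\<lambda>_. z)(1 := x, 2 := u, 3 := c, 4 := d, 5 := c', 6 := d')" 0
      "imp_fm (le_fm (Var 0) (Var 1) 30)
        (Ex 7 (Conj (beta_fm (Var 3) (Var 4) (Var 0) (Var 7) (Var 2) 30)
          (beta_fm (Var 5) (Var 6) (Var 0) (Var 7) (Var 2) 30)))"])
    case zero
    show ?case using assms unfolding codes_iteration_def by simp
  next
    case (succ a)
    show ?case
    proof
      assume "S a \<preceq> x"
      then have "a \<prec> x" using succ_le_iff by blast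
      with succ have "beta c d a = beta c' d' a" by (simp add: O.less_imp_le)
      then show "beta c d (S a) = beta c' d' (S a)"
        using assms \<open>a \<prec> x\<close> unfolding codes_iteration_def by simp
    qed
  qed auto
  then show ?thesis using assms(3) by blast
qed

definition iter :: "fsym \<Rightarrow> 'a \<Rightarrow> 'a \<Rightarrow> 'a \<Rightarrow> 'a" where
  "iter q y s x = (THE r. \<exists>c d. codes_iteration q y s c d x \<and> beta c d x = r)"

lemma iter_eqI: "codes_iteration q y s c d x \<Longrightarrow> iter q y s x = beta c d x"
  unfolding iter_def using codes_iteration_unique O.order_refl by (blast intro: the_equality)

lemma iter_zero: "iter q y s z = y"
  using codes_iteration_exists iter_eqI unfolding codes_iteration_def by metis

lemma iter_succ: "iter q y s (S x) = I q (iter q y s x) s"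
proof -
  obtain c d where cd: "codes_iteration q y s c d (S x)" using codes_iteration_exists by blast
  then have "codes_iteration q y s c d x"
    unfolding codes_iteration_def using less_succ O.less_trans by blast
  then show ?thesis using cd iter_eqI less_succ unfolding codes_iteration_def by metis
qed

definition iter_fm :: "fsym \<Rightarrow> trm \<Rightarrow> trm \<Rightarrow> fm" where
  "iter_fm q x r = Ex 33 (Ex 34 (Conj (codes_iteration_fm q (Var 33) (Var 34) x)
    (beta_fm (Var 33) (Var 34) x r (Var 2) 30)))"

lemma sat_iter_fm [simp]:
  assumes "e 1 = z" "e 2 = u"
    and "30 \<notin> term_vars x" "31 \<notin> term_vars x" "32 \<notin> term_vars x" "33 \<notin> term_vars x"
    "34 \<notin> term_vars x" and "30 \<notin> term_vars r" "33 \<notin> term_vars r" "34 \<notin> term_vars r"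
  shows "sat I e (iter_fm q x r) \<longleftrightarrow> iter q (e 3) (e 4) (evalt I e x) = evalt I e r"
  using assms codes_iteration_exists iter_eqI unfolding iter_fm_def by auto metis

lemma add_right_identity_iff: "(\<forall>x. x \<oplus> w = x) \<longleftrightarrow> w = z"
  by (metis add_zero_left add_zero_right)

lemma mult_right_identity_iff: "(\<forall>x. x \<otimes> w = x) \<longleftrightarrow> w = u"
  by (metis mult_one_left mult_one_right)

end


section \<open>The definable isomorphism\<close>

locale peano_pair =
  A: peano_structure I Plus Times z u + B: peano_structure I Plus' Times' z' u'
  for I :: "fsym \<Rightarrow> 'a \<Rightarrow> 'a \<Rightarrow> 'a" and z u z' u'
begin

definition \<pi> :: "'a \<Rightarrow> 'a" where
  "\<pi> = A.iter Plus' z' u'"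

definition constants :: "nat \<Rightarrow> 'a" where
  "constants = (\<lambda>_. z)(2 := u, 3 := z', 4 := u')"

lemma pi_zero: "\<pi> z = z'"
  unfolding \<pi>_def by (rule A.iter_zero)

lemma pi_succ: "\<pi> (I Plus x u) = I Plus' (\<pi> x) u'"
  unfolding \<pi>_def by (rule A.iter_succ)

lemma pi_one: "\<pi> u = u'"
  using pi_succ[of z] pi_zero by (simp add: B.add_zero_left)

lemma surj_pi: "surj \<pi>"
proof -
  have "\<exists>x. \<pi> x = y" for y
  proof (induction y rule: B.definable_induct[of constants 0 "Ex 6 (A.iter_fm Plus' (Var 6) (Var 0))"])
    case zero
    show ?case using pi_zero by blast
  next
    case (succ a)
    then show ?case using pi_succ by metis
  qed (simp add: constants_def \<pi>_def)
  then show ?thesis by (metis surjI)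
qed

lemma inj_pi: "inj \<pi>"
proof -
  have "\<forall>x'. \<pi> x = \<pi> x' \<longrightarrow> x = x'" for x
  proof (induction x rule: A.definable_induct[of constants 0
      "All 6 (imp_fm (Ex 7 (Conj (A.iter_fm Plus' (Var 0) (Var 7)) (A.iter_fm Plus' (Var 6) (Var 7))))
        (Eq (Var 0) (Var 6)))"])
    case definable
    then show ?case by (simp add: constants_def \<pi>_def) metis
  next
    case zero
    show ?case using pi_zero pi_succ A.zero_or_succ B.succ_neq_zero by metis
  next
    case (succ a)
    show ?case
    proof (intro allI impI)
      fix x' assume eq: "\<pi> (I Plus a u) = \<pi> x'"
      show "I Plus a u = x'"
      proof (cases "x' = z")
        case True
        then show ?thesis using eq pi_zero pi_succ B.succ_neq_zero by metis
      next
        case False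
        then obtain w where w: "x' = I Plus w u" using A.zero_or_succ by blast
        then have "\<pi> a = \<pi> w" using eq pi_succ B.succ_inject by metis
        then show ?thesis using succ w by blast
      qed
    qed
  qed
  then show ?thesis by (blast intro: injI)
qed

lemma pi_add: "\<pi> (I Plus a b) = I Plus' (\<pi> a) (\<pi> b)"
proof (induction b rule: A.definable_induct[of "constants(6 := a)" 0
    "Ex 7 (Ex 8 (Conj (A.iter_fm Plus' (Var 6) (Var 7)) (Conj (A.iter_fm Plus' (Var 0) (Var 8))
      (A.iter_fm Plus' (App Plus (Var 6) (Var 0)) (App Plus' (Var 7) (Var 8))))))"])
  case zero
  show ?case by (simp add: pi_zero A.add_zero_right B.add_zero_right)
next
  case (succ b)
  then show ?case by (simp add: pi_succ A.add_succ B.add_succ)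
qed (simp add: constants_def \<pi>_def)

lemma pi_mult: "\<pi> (I Times a b) = I Times' (\<pi> a) (\<pi> b)"
proof (induction b rule: A.definable_induct[of "constants(6 := a)" 0
    "Ex 7 (Ex 8 (Conj (A.iter_fm Plus' (Var 6) (Var 7)) (Conj (A.iter_fm Plus' (Var 0) (Var 8))
      (A.iter_fm Plus' (App Times (Var 6) (Var 0)) (App Times' (Var 7) (Var 8))))))"])
  case zero
  show ?case by (simp add: pi_zero A.mult_zero B.mult_zero)
next
  case (succ b)
  then show ?case by (simp add: pi_add pi_one A.mult_succ B.mult_succ)
qed (simp add: constants_def \<pi>_def)

lemma reduct_iso_pi: "reduct_iso I \<pi>"
  unfolding reduct_iso_def bij_def using inj_pi surj_pi pi_add pi_mult by blast

lemma fo_definable_pi: "fo_definable_fun I \<pi>"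
proof -
  define right_identity_fm :: "fsym \<Rightarrow> nat \<Rightarrow> fm" where
    "right_identity_fm f n = All 40 (Eq (App f (Var 40) (Var n)) (Var 40))" for f n
  define \<phi> where "\<phi> =
    Ex 1 (Conj (right_identity_fm Plus 1) (Ex 2 (Conj (right_identity_fm Times 2)
    (Ex 3 (Conj (right_identity_fm Plus' 3) (Ex 4 (Conj (right_identity_fm Times' 4)
      (A.iter_fm Plus' (Var 0) (Var 5)))))))))"
  have "sat I e \<phi> \<longleftrightarrow> \<pi> (e 0) = e 5" for e
    unfolding \<phi>_def right_identity_fm_def
    by (simp add: \<pi>_def A.add_right_identity_iff A.mult_right_identity_iff
        B.add_right_identity_iff B.mult_right_identity_iff)
  then show ?thesis unfolding fo_definable_fun_def by (intro exI[of _ \<phi>] exI[of _ 0] exI[of _ 5]) simp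
qed

end

theorem mainTheorem3:
  fixes I :: "fsym \<Rightarrow> 'a \<Rightarrow> 'a \<Rightarrow> 'a"
  assumes "peano_model I Plus Times"
      and "peano_model I Plus' Times'"
  shows "\<exists>\<pi>. reduct_iso I \<pi> \<and> fo_definable_fun I \<pi>"
proof -
  obtain z u where "peano_structure I Plus Times z u"
    using assms(1) by (rule peano_modelE)
  moreover obtain z' u' where "peano_structure I Plus' Times' z' u'"
    using assms(2) by (rule peano_modelE)
  ultimately interpret peano_pair I z u z' u' by (rule peano_pair.intro)
  show ?thesis using reduct_iso_pi fo_definable_pi by blast
qed

end
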